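(* Let $X$ be a $\mu$-space. Then $X$ has a fundamental compact resolution if and only if $L_p(X)$ has a fundamental bounded resolution.
   Context: A $\mu$-space is a Tychonoff space in which every functionally bounded subset (one on which every continuous real function is bounded) is relatively compact. $L(X)$ is the free locally convex space over $X$ (the vector space with Hamel basis $X$, identified with the dual of $C_p(X)$, the continuous real functions on $X$ with the pointwise topology), and $L_p(X)$ denotes $L(X)$ with the weak topology $\sigma(L(X),C(X))$, i.e. the weak* dual of $C_p(X)$. Order $\mathbb{N}^{\mathbb{N}}$ pointwise. A fundamental compact resolution of $X$ is a family $\{K_\alpha:\alpha\in\mathbb{N}^{\mathbb{N}}\}$ of compact sets covering $X$ with $K_\alpha\subseteq K_\beta$ for $\alpha\le\beta$ such that every compact subset of $X$ lies in some $K_\alpha$. A fundamental bounded resolution of a locally convex space $F$ is a family of bounded sets with the same monotonicity, covering $F$, such that every bounded subset of $F$ lies in some member. *)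

theory Defs
  imports "HOL-Analysis.Analysis"
begin

definition tychonoff_space :: "'a topology \<Rightarrow> bool" where
  "tychonoff_space X \<longleftrightarrow> completely_regular_space X \<and> Hausdorff_space X"

definition functionally_bounded :: "'a topology \<Rightarrow> 'a set \<Rightarrow> bool" where
  "functionally_bounded X A \<longleftrightarrow> A \<subseteq> topspace X \<and>
     (\<forall>f. continuous_map X euclideanreal f \<longrightarrow> bounded (f ` A))"

definition mu_space :: "'a topology \<Rightarrow> bool" where
  "mu_space X \<longleftrightarrow> tychonoff_space X \<and>
     (\<forall>A. functionally_bounded X A \<longrightarrow> compactin X (X closure_of A))"

text \<open>The free vector space L(X): finitely supported real functions on the points of X
  (Hamel basis = the points of X, identified with the indicator functions).\<close>
definition Lcarrier :: "'a topology \<Rightarrow> ('a \<Rightarrow> real) set" where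
  "Lcarrier X = {c. finite {x. c x \<noteq> 0} \<and> {x. c x \<noteq> 0} \<subseteq> topspace X}"

definition Lpair :: "('a \<Rightarrow> real) \<Rightarrow> ('a \<Rightarrow> real) \<Rightarrow> real" where
  "Lpair c f = (\<Sum>x\<in>{x. c x \<noteq> 0}. c x * f x)"

definition Lp_topology :: "'a topology \<Rightarrow> ('a \<Rightarrow> real) topology" where
  "Lp_topology X = topology_generated_by
     {{c \<in> Lcarrier X. Lpair c f \<in> U} | f U. continuous_map X euclideanreal f \<and> open U}"

definition tvs_bounded :: "('b \<Rightarrow> real) topology \<Rightarrow> ('b \<Rightarrow> real) set \<Rightarrow> bool" where
  "tvs_bounded T B \<longleftrightarrow> B \<subseteq> topspace T \<and>
     (\<forall>U. openin T U \<and> (\<lambda>_. 0) \<in> U \<longrightarrow>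
        (\<exists>t>0. \<forall>s\<ge>t. B \<subseteq> (\<lambda>c x. s * c x) ` U))"

definition fundamental_compact_resolution ::
    "'a topology \<Rightarrow> ((nat \<Rightarrow> nat) \<Rightarrow> 'a set) \<Rightarrow> bool" where
  "fundamental_compact_resolution X K \<longleftrightarrow>
     (\<forall>\<alpha>. compactin X (K \<alpha>)) \<and>
     (\<forall>\<alpha> \<beta>. \<alpha> \<le> \<beta> \<longrightarrow> K \<alpha> \<subseteq> K \<beta>) \<and>
     (\<Union>\<alpha>. K \<alpha>) = topspace X \<and>
     (\<forall>C. compactin X C \<longrightarrow> (\<exists>\<alpha>. C \<subseteq> K \<alpha>))"

definition fundamental_bounded_resolution ::
    "('b \<Rightarrow> real) topology \<Rightarrow> ((nat \<Rightarrow> nat) \<Rightarrow> ('b \<Rightarrow> real) set) \<Rightarrow> bool" where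
  "fundamental_bounded_resolution T K \<longleftrightarrow>
     (\<forall>\<alpha>. tvs_bounded T (K \<alpha>)) \<and>
     (\<forall>\<alpha> \<beta>. \<alpha> \<le> \<beta> \<longrightarrow> K \<alpha> \<subseteq> K \<beta>) \<and>
     (\<Union>\<alpha>. K \<alpha>) = topspace T \<and>
     (\<forall>B. tvs_bounded T B \<longrightarrow> (\<exists>\<alpha>. B \<subseteq> K \<alpha>))"

end

theory Submission
  imports Defs
begin

text \<open>
  Both directions pass through the supports of elements of L(X). A set B of elements of L(X) is
  bounded in L_p(X) iff it is pointwise bounded on C(X). For Tychonoff X this forces the l1-norms
  on B to be bounded (a gliding hump argument with a series of norming functions) and the union of
  the supports of B to be functionally bounded (otherwise a locally finite sum of bumps is a
  continuous function that is unbounded on B); in a \<mu>-space that union then has compact closure.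
  Hence a fundamental compact resolution K of X yields the fundamental bounded resolution
  \<alpha> \<mapsto> {c. supp c \<subseteq> K \<alpha> and l1-norm of c \<le> \<alpha> 0} of L_p(X). Conversely a fundamental
  bounded resolution B of L_p(X) yields \<alpha> \<mapsto> closure of the union of the supports of B \<alpha>,
  since the point masses of a compact set form a bounded set.
\<close>

definition supp :: "('a \<Rightarrow> real) \<Rightarrow> 'a set" where
  "supp c = {x. c x \<noteq> 0}"

lemma Lpair_supp: "Lpair c f = (\<Sum>x\<in>supp c. c x * f x)"
  by (simp add: Lpair_def supp_def)

lemma Lcarrier_iff: "c \<in> Lcarrier X \<longleftrightarrow> finite (supp c) \<and> supp c \<subseteq> topspace X"
  by (simp add: Lcarrier_def supp_def)

lemma supp_scale: "r \<noteq> 0 \<Longrightarrow> supp (\<lambda>x. r * c x) = supp c"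
  by (auto simp: supp_def)

lemma Lpair_scale: "Lpair (\<lambda>x. r * c x) f = r * Lpair c f"
proof (cases "r = 0")
  case True
  then show ?thesis by (simp add: Lpair_def)
next
  case False
  then show ?thesis by (simp add: Lpair_supp supp_scale sum_distrib_left mult.assoc)
qed

lemma Lpair_zero_left [simp]: "Lpair (\<lambda>_. 0) f = 0"
  by (simp add: Lpair_def)

lemma Lpair_zero_right [simp]: "Lpair c (\<lambda>_. 0) = 0"
  by (simp add: Lpair_def)

lemma zero_in_Lcarrier [simp]: "(\<lambda>_. 0) \<in> Lcarrier X"
  by (simp add: Lcarrier_def)

lemma Lpair_cong: "(\<And>x. x \<in> supp c \<Longrightarrow> f x = g x) \<Longrightarrow> Lpair c f = Lpair c g"
  unfolding Lpair_supp by (rule sum.cong) auto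

lemma Lpair_add: "Lpair c (\<lambda>x. f x + g x) = Lpair c f + Lpair c g"
  unfolding Lpair_def by (simp add: distrib_left sum.distrib)

lemma Lpair_cmult: "Lpair c (\<lambda>x. r * f x) = r * Lpair c f"
  unfolding Lpair_def by (simp add: sum_distrib_left algebra_simps)

lemma Lpair_remove:
  assumes "finite (supp c)" "x \<in> supp c" "\<And>y. y \<in> supp c - {x} \<Longrightarrow> f y = 0"
  shows "Lpair c f = c x * f x"
proof -
  have "Lpair c f = c x * f x + (\<Sum>y\<in>supp c - {x}. c y * f y)"
    unfolding Lpair_supp using assms(1,2) by (simp add: sum.remove)
  then show ?thesis using assms(3) by simp
qed

definition delta :: "'a \<Rightarrow> 'a \<Rightarrow> real" where
  "delta x = (\<lambda>y. if y = x then 1 else 0)"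

lemma supp_delta [simp]: "supp (delta x) = {x}"
  by (auto simp: supp_def delta_def)

lemma Lpair_delta [simp]: "Lpair (delta x) f = f x"
  unfolding Lpair_supp supp_delta by (simp add: delta_def)

lemma delta_in_Lcarrier: "x \<in> topspace X \<Longrightarrow> delta x \<in> Lcarrier X"
  by (simp add: Lcarrier_iff)

lemma supports_subset_topspace: "B \<subseteq> Lcarrier X \<Longrightarrow> (\<Union>c\<in>B. supp c) \<subseteq> topspace X"
  by (force simp: Lcarrier_iff)

lemma topspace_Lp_topology: "topspace (Lp_topology X) = Lcarrier X"
proof -
  have "Lcarrier X \<in> {{c \<in> Lcarrier X. Lpair c f \<in> U} | f U.
      continuous_map X euclideanreal f \<and> open U}"
    by (rule CollectI, rule exI[of _ "\<lambda>_. 0"], rule exI[of _ UNIV]) simp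
  then show ?thesis
    unfolding Lp_topology_def by auto
qed

lemma openin_Lp_topology_subbasic:
  assumes "continuous_map X euclideanreal f" "open U"
  shows "openin (Lp_topology X) {c \<in> Lcarrier X. Lpair c f \<in> U}"
  unfolding Lp_topology_def openin_topology_generated_by_iff
  by (rule generate_topology_on.Basis, rule CollectI, rule exI[of _ f], rule exI[of _ U])
    (simp add: assms)

definition weak_nbhd :: "'a topology \<Rightarrow> ('a \<Rightarrow> real) \<Rightarrow> ('a \<Rightarrow> real) set \<Rightarrow> real \<Rightarrow> ('a \<Rightarrow> real) set"
  where "weak_nbhd X p F e = {c \<in> Lcarrier X. \<forall>f\<in>F. \<bar>Lpair c f - Lpair p f\<bar> < e}"

lemma weak_nbhd_Un_min_subset:
  "weak_nbhd X p (F1 \<union> F2) (min e1 e2) \<subseteq> weak_nbhd X p F1 e1 \<inter> weak_nbhd X p F2 e2"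
  by (auto simp: weak_nbhd_def)

lemma openin_Lp_topology_contains_weak_nbhd:
  assumes "openin (Lp_topology X) U" "p \<in> U"
  obtains F e where "finite F" "\<forall>f\<in>F. continuous_map X euclideanreal f" "e > 0"
    "weak_nbhd X p F e \<subseteq> U"
proof -
  have "generate_topology_on
      {{c \<in> Lcarrier X. Lpair c f \<in> U} | f U. continuous_map X euclideanreal f \<and> open U} U"
    using assms(1) unfolding Lp_topology_def openin_topology_generated_by_iff .
  from this assms(2) have "\<exists>F e. finite F \<and> (\<forall>f\<in>F. continuous_map X euclideanreal f) \<and> e > 0 \<and>
      weak_nbhd X p F e \<subseteq> U"
  proof (induction arbitrary: p)
    case (Int a b)
    from Int.prems have "p \<in> a" "p \<in> b"
      by auto
    obtain F1 e1 where F1: "finite F1" "\<forall>f\<in>F1. continuous_map X euclideanreal f" "e1 > 0"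
      and a: "weak_nbhd X p F1 e1 \<subseteq> a"
      using Int.IH(1)[OF \<open>p \<in> a\<close>] by blast
    obtain F2 e2 where F2: "finite F2" "\<forall>f\<in>F2. continuous_map X euclideanreal f" "e2 > 0"
      and b: "weak_nbhd X p F2 e2 \<subseteq> b"
      using Int.IH(2)[OF \<open>p \<in> b\<close>] by blast
    have "weak_nbhd X p (F1 \<union> F2) (min e1 e2) \<subseteq> a \<inter> b"
      using weak_nbhd_Un_min_subset a b by blast
    moreover have "finite (F1 \<union> F2)" "\<forall>f\<in>F1 \<union> F2. continuous_map X euclideanreal f"
      "min e1 e2 > 0"
      using F1 F2 by auto
    ultimately show ?case
      by blast
  next
    case (UN K)
    then obtain k where "k \<in> K" "p \<in> k"
      by auto
    with UN.IH[of k p] show ?case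
      by blast
  next
    case (Basis s)
    then obtain f V where s: "s = {c \<in> Lcarrier X. Lpair c f \<in> V}"
      and f: "continuous_map X euclideanreal f" and V: "open V"
      by auto
    with Basis.prems have "Lpair p f \<in> V"
      by auto
    with V obtain e where "e > 0" "ball (Lpair p f) e \<subseteq> V"
      by (meson open_contains_ball)
    with f s show ?case
      by (intro exI[of _ "{f}"] exI[of _ e]) (auto simp: weak_nbhd_def dist_real_def abs_minus_commute)
  qed simp
  then show thesis
    using that by blast
qed

definition weakly_bounded :: "'a topology \<Rightarrow> ('a \<Rightarrow> real) set \<Rightarrow> bool" where
  "weakly_bounded X B \<longleftrightarrow> B \<subseteq> Lcarrier X \<and>
     (\<forall>f. continuous_map X euclideanreal f \<longrightarrow> bounded ((\<lambda>c. Lpair c f) ` B))"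

lemma weakly_boundedD:
  assumes "weakly_bounded X B" "continuous_map X euclideanreal f"
  obtains M where "\<And>c. c \<in> B \<Longrightarrow> \<bar>Lpair c f\<bar> \<le> M"
proof -
  have "bounded ((\<lambda>c. Lpair c f) ` B)"
    using assms unfolding weakly_bounded_def by blast
  then show thesis
    using that unfolding bounded_real by fast
qed

lemma weakly_bounded_bound_function:
  assumes "weakly_bounded X B"
  obtains M where "\<And>f c. continuous_map X euclideanreal f \<Longrightarrow> c \<in> B \<Longrightarrow> \<bar>Lpair c f\<bar> \<le> M f"
proof -
  have "\<exists>M. continuous_map X euclideanreal f \<longrightarrow> (\<forall>c\<in>B. \<bar>Lpair c f\<bar> \<le> M)" for f
  proof (cases "continuous_map X euclideanreal f")
    case True
    then obtain M where "\<And>c. c \<in> B \<Longrightarrow> \<bar>Lpair c f\<bar> \<le> M"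
      using weakly_boundedD[OF assms] by auto
    then show ?thesis
      by blast
  qed simp
  then have "\<forall>f. \<exists>M. continuous_map X euclideanreal f \<longrightarrow> (\<forall>c\<in>B. \<bar>Lpair c f\<bar> \<le> M)"
    by blast
  then obtain M where "\<forall>f. continuous_map X euclideanreal f \<longrightarrow> (\<forall>c\<in>B. \<bar>Lpair c f\<bar> \<le> M f)"
    by (rule choice[THEN exE]) blast
  then show thesis
    using that by blast
qed

lemma weakly_bounded_uniform_on_finite:
  assumes "weakly_bounded X B" "finite F" "\<forall>f\<in>F. continuous_map X euclideanreal f"
  obtains M where "\<And>f c. f \<in> F \<Longrightarrow> c \<in> B \<Longrightarrow> \<bar>Lpair c f\<bar> \<le> M"
proof -
  have "bounded (\<Union>f\<in>F. (\<lambda>c. Lpair c f) ` B)"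
    using assms unfolding weakly_bounded_def by (intro bounded_UN) auto
  then show thesis
    using that unfolding bounded_real by fast
qed

lemma tvs_bounded_imp_weakly_bounded:
  assumes "tvs_bounded (Lp_topology X) B"
  shows "weakly_bounded X B"
  unfolding weakly_bounded_def
proof (intro conjI allI impI)
  show "B \<subseteq> Lcarrier X"
    using assms unfolding tvs_bounded_def topspace_Lp_topology by blast
  fix f :: "'a \<Rightarrow> real"
  assume "continuous_map X euclideanreal f"
  then have "openin (Lp_topology X) {c \<in> Lcarrier X. Lpair c f \<in> ball 0 1}"
    by (intro openin_Lp_topology_subbasic) simp_all
  moreover have "(\<lambda>_. 0) \<in> {c \<in> Lcarrier X. Lpair c f \<in> ball 0 1}"
    by simp
  ultimately obtain t where "t > 0"
    and t: "B \<subseteq> (\<lambda>c x. t * c x) ` {c \<in> Lcarrier X. Lpair c f \<in> ball 0 1}"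
    using assms unfolding tvs_bounded_def by (meson order.refl)
  have "\<bar>Lpair c f\<bar> \<le> t" if "c \<in> B" for c
  proof -
    obtain u where "\<bar>Lpair u f\<bar> < 1" "c = (\<lambda>x. t * u x)"
      using t \<open>c \<in> B\<close> by auto
    then show ?thesis
      using \<open>t > 0\<close> by (simp add: Lpair_scale abs_mult)
  qed
  then show "bounded ((\<lambda>c. Lpair c f) ` B)"
    unfolding bounded_real by blast
qed

lemma scaled_in_weak_nbhd:
  assumes "c \<in> Lcarrier X" "\<And>f. f \<in> F \<Longrightarrow> \<bar>Lpair c f\<bar> \<le> M" "e > 0" "(\<bar>M\<bar> + 1) / e \<le> s"
  shows "(\<lambda>x. c x / s) \<in> weak_nbhd X (\<lambda>_. 0) F e"
  unfolding weak_nbhd_def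
proof (safe)
  have "0 < (\<bar>M\<bar> + 1) / e"
    using assms(3) by simp
  then have "s > 0"
    using assms(4) by linarith
  then show "(\<lambda>x. c x / s) \<in> Lcarrier X"
    using assms(1) supp_scale[of "1 / s" c] by (simp add: Lcarrier_iff)
  have "\<bar>M\<bar> + 1 \<le> s * e"
    using assms(3,4) by (simp add: pos_divide_le_eq)
  fix f
  assume "f \<in> F"
  have "\<bar>Lpair (\<lambda>x. c x / s) f\<bar> * s = \<bar>Lpair c f\<bar>"
    using Lpair_scale[of "1 / s" c f] \<open>s > 0\<close> by (simp add: abs_mult)
  also have "\<dots> < e * s"
    using assms(2)[OF \<open>f \<in> F\<close>] \<open>\<bar>M\<bar> + 1 \<le> s * e\<close> by (simp add: mult.commute)
  finally show "\<bar>Lpair (\<lambda>x. c x / s) f - Lpair (\<lambda>_. 0) f\<bar> < e"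
    using \<open>s > 0\<close> by simp
qed

lemma weakly_bounded_imp_tvs_bounded:
  assumes wb: "weakly_bounded X B"
  shows "tvs_bounded (Lp_topology X) B"
  unfolding tvs_bounded_def topspace_Lp_topology
proof (intro conjI allI impI)
  show BL: "B \<subseteq> Lcarrier X"
    using wb unfolding weakly_bounded_def by blast
  fix U
  assume U: "openin (Lp_topology X) U \<and> (\<lambda>_. 0) \<in> U"
  obtain F e where F: "finite F" "\<forall>f\<in>F. continuous_map X euclideanreal f" and "e > 0"
    and FU: "weak_nbhd X (\<lambda>_. 0) F e \<subseteq> U"
    by (rule openin_Lp_topology_contains_weak_nbhd[of X U "\<lambda>_. 0"]) (use U in auto)
  obtain M where M: "\<And>f c. f \<in> F \<Longrightarrow> c \<in> B \<Longrightarrow> \<bar>Lpair c f\<bar> \<le> M"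
    using weakly_bounded_uniform_on_finite[OF wb F] by blast
  have t: "(\<bar>M\<bar> + 1) / e > 0"
    using \<open>e > 0\<close> by simp
  moreover have "c \<in> (\<lambda>c x. s * c x) ` U" if "(\<bar>M\<bar> + 1) / e \<le> s" "c \<in> B" for s c
  proof -
    have "(\<lambda>x. c x / s) \<in> U"
      using scaled_in_weak_nbhd[of c X F M e s] BL M that \<open>e > 0\<close> FU by blast
    then have "(\<lambda>x. s * (c x / s)) \<in> (\<lambda>c x. s * c x) ` U"
      by (rule imageI)
    moreover have "s > 0"
      using that(1) t by linarith
    then have "(\<lambda>x. s * (c x / s)) = c"
      by simp
    ultimately show ?thesis
      by simp
  qed
  ultimately show "\<exists>t>0. \<forall>s\<ge>t. B \<subseteq> (\<lambda>c x. s * c x) ` U"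
    by blast
qed

lemma tvs_bounded_Lp_iff: "tvs_bounded (Lp_topology X) B \<longleftrightarrow> weakly_bounded X B"
  using tvs_bounded_imp_weakly_bounded weakly_bounded_imp_tvs_bounded by blast

definition L1norm :: "('a \<Rightarrow> real) \<Rightarrow> real" where
  "L1norm c = (\<Sum>x\<in>supp c. \<bar>c x\<bar>)"

lemma abs_Lpair_le:
  assumes "finite (supp c)" "\<And>x. x \<in> supp c \<Longrightarrow> \<bar>f x\<bar> \<le> M"
  shows "\<bar>Lpair c f\<bar> \<le> L1norm c * M"
proof -
  have "\<bar>Lpair c f\<bar> \<le> (\<Sum>x\<in>supp c. \<bar>c x\<bar> * \<bar>f x\<bar>)"
    unfolding Lpair_supp abs_mult[symmetric] by (rule sum_abs)
  also have "\<dots> \<le> (\<Sum>x\<in>supp c. \<bar>c x\<bar> * M)"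
    using assms(2) by (intro sum_mono mult_left_mono) auto
  finally show ?thesis
    by (simp add: L1norm_def sum_distrib_right)
qed

lemma tychonoff_isolating_function:
  assumes "tychonoff_space X" "finite F" "F \<subseteq> topspace X" "x \<in> F"
  obtains \<phi> where "continuous_map X euclideanreal \<phi>" "\<phi> x = 1" "\<And>y. y \<in> F - {x} \<Longrightarrow> \<phi> y = 0"
proof -
  have "completely_regular_space X" "t1_space X"
    using assms(1) Hausdorff_imp_t1_space unfolding tychonoff_space_def by auto
  moreover have "closedin X (F - {x})"
    using \<open>t1_space X\<close> assms(2,3) unfolding t1_space_closedin_finite by auto
  moreover have "x \<in> topspace X - (F - {x})"
    using assms(3,4) by auto
  ultimately obtain f where f: "continuous_map X (top_of_set {0..1::real}) f" "f x = 0"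
    "f ` (F - {x}) \<subseteq> {1}"
    unfolding completely_regular_space_def by blast
  show thesis
  proof
    show "continuous_map X euclideanreal (\<lambda>y. 1 - f y)"
      using f(1) by (intro continuous_intros) (simp add: continuous_map_in_subtopology)
  qed (use f in auto)
qed

lemma tychonoff_interpolating_function:
  assumes "tychonoff_space X" "finite F" "F \<subseteq> topspace X"
  obtains h where "continuous_map X euclideanreal h" "\<And>y. y \<in> F \<Longrightarrow> h y = v y"
proof -
  have "\<forall>x\<in>F. \<exists>\<phi>. continuous_map X euclideanreal \<phi> \<and> \<phi> x = 1 \<and> (\<forall>y\<in>F - {x}. \<phi> y = 0)"
  proof
    fix x
    assume "x \<in> F"
    obtain \<phi> where "continuous_map X euclideanreal \<phi>" "\<phi> x = 1" "\<And>y. y \<in> F - {x} \<Longrightarrow> \<phi> y = 0"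
      using tychonoff_isolating_function[OF assms \<open>x \<in> F\<close>] by blast
    then show "\<exists>\<phi>. continuous_map X euclideanreal \<phi> \<and> \<phi> x = 1 \<and> (\<forall>y\<in>F - {x}. \<phi> y = 0)"
      by blast
  qed
  then obtain \<Phi> where "\<forall>x\<in>F. continuous_map X euclideanreal (\<Phi> x) \<and> \<Phi> x x = 1 \<and>
      (\<forall>y\<in>F - {x}. \<Phi> x y = 0)"
    by (rule bchoice[THEN exE]) blast
  then have \<Phi>: "\<And>x. x \<in> F \<Longrightarrow> continuous_map X euclideanreal (\<Phi> x)"
    "\<And>x. x \<in> F \<Longrightarrow> \<Phi> x x = 1" "\<And>x y. x \<in> F \<Longrightarrow> y \<in> F - {x} \<Longrightarrow> \<Phi> x y = 0"
    by auto
  show thesis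
  proof
    show "continuous_map X euclideanreal (\<lambda>y. \<Sum>x\<in>F. v x * \<Phi> x y)"
      by (intro continuous_intros continuous_map_sum assms(2)) (use \<Phi>(1) in auto)
    fix y
    assume "y \<in> F"
    then have "(\<Sum>x\<in>F. v x * \<Phi> x y) = v y * \<Phi> y y + (\<Sum>x\<in>F - {y}. v x * \<Phi> x y)"
      using assms(2) by (simp add: sum.remove)
    moreover have "(\<Sum>x\<in>F - {y}. v x * \<Phi> x y) = 0"
      using \<Phi>(3) \<open>y \<in> F\<close> by (intro sum.neutral) auto
    ultimately show "(\<Sum>x\<in>F. v x * \<Phi> x y) = v y"
      using \<Phi>(2) \<open>y \<in> F\<close> by simp
  qed
qed

lemma Lpair_norming_function:
  assumes "tychonoff_space X" "c \<in> Lcarrier X"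
  obtains g where "continuous_map X euclideanreal g" "\<And>y. \<bar>g y\<bar> \<le> 1" "Lpair c g = L1norm c"
proof -
  have fin: "finite (supp c)" and sub: "supp c \<subseteq> topspace X"
    using assms(2) by (auto simp: Lcarrier_iff)
  obtain h where h: "continuous_map X euclideanreal h" "\<And>y. y \<in> supp c \<Longrightarrow> h y = sgn (c y)"
    using tychonoff_interpolating_function[OF assms(1) fin sub, where v = "\<lambda>y. sgn (c y)"] by blast
  show thesis
  proof
    show "continuous_map X euclideanreal (\<lambda>y. max (-1) (min 1 (h y)))"
      by (intro continuous_intros h(1))
    show "\<bar>max (-1) (min 1 (h y))\<bar> \<le> 1" for y
      by simp
    have "Lpair c (\<lambda>y. max (-1) (min 1 (h y))) = (\<Sum>x\<in>supp c. c x * sgn (c x))"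
      unfolding Lpair_supp by (rule sum.cong) (auto simp: h(2) sgn_if)
    then show "Lpair c (\<lambda>y. max (-1) (min 1 (h y))) = L1norm c"
      by (simp add: L1norm_def abs_sgn)
  qed
qed

lemma Lpair_norming_functions:
  assumes "tychonoff_space X" "B \<subseteq> Lcarrier X"
  obtains g where "\<And>c. c \<in> B \<Longrightarrow> continuous_map X euclideanreal (g c)"
    "\<And>c y. c \<in> B \<Longrightarrow> \<bar>g c y\<bar> \<le> 1" "\<And>c. c \<in> B \<Longrightarrow> Lpair c (g c) = L1norm c"
proof -
  have "\<forall>c\<in>B. \<exists>g. continuous_map X euclideanreal g \<and> (\<forall>y. \<bar>g y\<bar> \<le> 1) \<and> Lpair c g = L1norm c"
  proof
    fix c
    assume "c \<in> B"
    then obtain g where "continuous_map X euclideanreal g" "\<And>y. \<bar>g y\<bar> \<le> 1" "Lpair c g = L1norm c"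
      using Lpair_norming_function[OF assms(1)] assms(2) by auto
    then show "\<exists>g. continuous_map X euclideanreal g \<and> (\<forall>y. \<bar>g y\<bar> \<le> 1) \<and> Lpair c g = L1norm c"
      by blast
  qed
  then obtain g where "\<forall>c\<in>B. continuous_map X euclideanreal (g c) \<and> (\<forall>y. \<bar>g c y\<bar> \<le> 1) \<and>
      Lpair c (g c) = L1norm c"
    by (rule bchoice[THEN exE]) blast
  then show thesis
    using that by blast
qed

lemma continuous_map_real_uniform_limit:
  assumes "\<forall>\<^sub>F n in F. continuous_map X euclideanreal (f n)"
    "uniform_limit (topspace X) f g F" "\<not> trivial_limit F"
  shows "continuous_map X euclideanreal g"
proof -
  have "continuous_map X Met_TC.mtopology g"
    by (rule Met_TC.continuous_map_uniform_limit[OF _ _ assms(3)])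
      (use assms(1) uniform_limitD[OF assms(2)] in simp_all)
  then show ?thesis
    by simp
qed

lemma continuous_map_quarter_series:
  assumes "\<And>j. continuous_map X euclideanreal (g j)" "\<And>j y. \<bar>g j y\<bar> \<le> 1"
  shows "continuous_map X euclideanreal (\<lambda>y. \<Sum>j. (1/4) ^ j * g j y)"
proof (rule continuous_map_real_uniform_limit)
  show "uniform_limit (topspace X) (\<lambda>n y. \<Sum>j<n. (1/4) ^ j * g j y)
      (\<lambda>y. \<Sum>j. (1/4) ^ j * g j y) sequentially"
    by (rule Weierstrass_m_test[where M = "\<lambda>j. (1/4) ^ j"])
      (use assms(2) in \<open>auto simp: abs_mult mult_left_le\<close>)
qed (use assms(1) in \<open>auto intro!: always_eventually continuous_map_sum continuous_intros\<close>)

lemma quarter_series_lower_bound: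
  fixes a :: "nat \<Rightarrow> real"
  assumes bound: "\<And>j. \<bar>a j\<bar> \<le> L * (1/4) ^ j" and peak: "a k = L * (1/4) ^ k"
  shows "summable a" "2/3 * L * (1/4) ^ k - (\<Sum>j<k. \<bar>a j\<bar>) \<le> suminf a"
proof -
  have geo: "summable (\<lambda>j. L * (1/4::real) ^ j)"
    by (intro summable_mult summable_geometric) simp
  show "summable a"
    by (rule summable_comparison_test[OF _ geo]) (use bound in auto)
  have tail_geo: "summable (\<lambda>j. L * (1/4::real) ^ (j + Suc k))"
    using summable_ignore_initial_segment[OF geo, of "Suc k"] .
  have "(\<lambda>j. L * (1/4::real) ^ (j + Suc k)) = (\<lambda>j. L * (1/4) ^ Suc k * (1/4) ^ j)"
    by (simp add: power_add mult_ac)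
  moreover have "(\<lambda>j. L * (1/4) ^ Suc k * (1/4::real) ^ j) sums (L * (1/4) ^ Suc k * (1 / (1 - 1/4)))"
    by (intro sums_mult geometric_sums) simp
  ultimately have tail_sum: "(\<Sum>j. L * (1/4::real) ^ (j + Suc k)) = 1/3 * L * (1/4) ^ k"
    by (simp add: sums_iff)
  have "- (L * (1/4) ^ (j + Suc k)) \<le> a (j + Suc k)" for j
    using bound[of "j + Suc k"] by linarith
  then have "(\<Sum>j. - (L * (1/4::real) ^ (j + Suc k))) \<le> (\<Sum>j. a (j + Suc k))"
    by (intro suminf_le summable_minus tail_geo summable_ignore_initial_segment \<open>summable a\<close>)
  then have "- (\<Sum>j. L * (1/4::real) ^ (j + Suc k)) \<le> (\<Sum>j. a (j + Suc k))"
    by (simp only: suminf_minus[OF tail_geo])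
  moreover have "- (\<Sum>j<k. \<bar>a j\<bar>) \<le> (\<Sum>j<k. a j)"
    using sum_abs[of a "{..<k}"] by linarith
  moreover have "suminf a = (\<Sum>j. a (j + Suc k)) + (\<Sum>j<k. a j) + a k"
    using suminf_split_initial_segment[OF \<open>summable a\<close>, of "Suc k"] by simp
  ultimately show "2/3 * L * (1/4) ^ k - (\<Sum>j<k. \<bar>a j\<bar>) \<le> suminf a"
    using tail_sum peak by linarith
qed

lemma Lpair_suminf:
  assumes "finite (supp c)" "\<And>x. summable (\<lambda>j. a j x)"
  shows "Lpair c (\<lambda>x. \<Sum>j. a j x) = (\<Sum>j. Lpair c (a j))"
proof -
  have "Lpair c (\<lambda>x. \<Sum>j. a j x) = (\<Sum>x\<in>supp c. \<Sum>j. c x * a j x)"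
    unfolding Lpair_supp using assms(2) by (simp add: suminf_mult)
  also have "\<dots> = (\<Sum>j. \<Sum>x\<in>supp c. c x * a j x)"
    by (rule suminf_sum[symmetric]) (use assms(2) in \<open>auto intro: summable_mult\<close>)
  finally show ?thesis
    unfolding Lpair_supp .
qed

lemma Lpair_quarter_series_lower_bound:
  assumes "finite (supp c)" "\<And>j y. \<bar>g j y\<bar> \<le> 1" "Lpair c (g k) = L1norm c"
  shows "2/3 * L1norm c * (1/4) ^ k - (\<Sum>j<k. \<bar>Lpair c (g j)\<bar>)
    \<le> Lpair c (\<lambda>y. \<Sum>j. (1/4) ^ j * g j y)"
proof -
  define a where "a = (\<lambda>j. (1/4) ^ j * Lpair c (g j))"
  have bound: "\<bar>a j\<bar> \<le> L1norm c * (1/4) ^ j" for j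
    using abs_Lpair_le[OF assms(1), of "g j" 1] assms(2) by (simp add: a_def abs_mult)
  have "summable (\<lambda>j. (1/4::real) ^ j * g j y)" for y
    by (rule summable_comparison_test[of _ "\<lambda>j. (1/4::real) ^ j"])
      (use assms(2) in \<open>auto simp: abs_mult mult_left_le summable_geometric\<close>)
  then have "Lpair c (\<lambda>y. \<Sum>j. (1/4) ^ j * g j y) = suminf a"
    using Lpair_suminf[OF assms(1), of "\<lambda>j y. (1/4) ^ j * g j y"] by (simp add: a_def Lpair_cmult)
  moreover have "(\<Sum>j<k. \<bar>a j\<bar>) \<le> (\<Sum>j<k. \<bar>Lpair c (g j)\<bar>)"
    by (intro sum_mono) (simp add: a_def abs_mult mult_left_le_one_le power_le_one)
  ultimately show ?thesis
    using quarter_series_lower_bound(2)[OF bound, of k] assms(3) by (simp add: a_def mult_ac)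
qed

lemma gliding_hump_sequence:
  fixes N w :: "'b \<Rightarrow> real"
  assumes unbounded: "\<And>R. \<exists>c\<in>B. R < N c"
  obtains s where "\<And>n. s n \<in> B" "\<And>n. real n + (\<Sum>j<n. w (s j)) \<le> 2/3 * N (s n) * (1/4) ^ n"
proof -
  have "\<exists>s. \<forall>n. s n \<in> B \<and> real n + (\<Sum>j<n. w (s j)) \<le> 2/3 * N (s n) * (1/4) ^ n"
  proof (rule dependent_wf_choice[OF wf_less_than])
    fix n and s t :: "nat \<Rightarrow> 'b" and c
    assume "\<And>j. (j, n) \<in> less_than \<Longrightarrow> s j = t j"
    then have "(\<Sum>j<n. w (s j)) = (\<Sum>j<n. w (t j))"
      by (intro sum.cong) auto
    then show "(c \<in> B \<and> real n + (\<Sum>j<n. w (s j)) \<le> 2/3 * N c * (1/4) ^ n) \<longleftrightarrow>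
        (c \<in> B \<and> real n + (\<Sum>j<n. w (t j)) \<le> 2/3 * N c * (1/4) ^ n)"
      by simp
  next
    fix n and s :: "nat \<Rightarrow> 'b"
    have "0 < 2/3 * (1/4::real) ^ n"
      by simp
    moreover obtain c where "c \<in> B" "(real n + (\<Sum>j<n. w (s j))) / (2/3 * (1/4) ^ n) < N c"
      using unbounded by blast
    ultimately have "real n + (\<Sum>j<n. w (s j)) < N c * (2/3 * (1/4) ^ n)"
      by (simp only: pos_divide_less_eq)
    with \<open>c \<in> B\<close> show "\<exists>c. c \<in> B \<and> real n + (\<Sum>j<n. w (s j)) \<le> 2/3 * N c * (1/4) ^ n"
      by (intro exI[of _ c]) (simp add: mult_ac)
  qed
  then show thesis
    using that by blast
qed

lemma weakly_bounded_imp_L1norm_bounded: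
  assumes tych: "tychonoff_space X" and wb: "weakly_bounded X B"
  obtains R where "\<And>c. c \<in> B \<Longrightarrow> L1norm c \<le> R"
proof -
  have BL: "B \<subseteq> Lcarrier X"
    using wb unfolding weakly_bounded_def by blast
  have "\<exists>R. \<forall>c\<in>B. L1norm c \<le> R"
  proof (rule ccontr)
    assume "\<nexists>R. \<forall>c\<in>B. L1norm c \<le> R"
    then have unbounded: "\<exists>c\<in>B. R < L1norm c" for R
      by (meson not_le)
    obtain norming where norming: "\<And>c. c \<in> B \<Longrightarrow> continuous_map X euclideanreal (norming c)"
      "\<And>c y. c \<in> B \<Longrightarrow> \<bar>norming c y\<bar> \<le> 1" "\<And>c. c \<in> B \<Longrightarrow> Lpair c (norming c) = L1norm c"
      using Lpair_norming_functions[OF tych BL] by blast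
    obtain M where M: "\<And>g c. continuous_map X euclideanreal g \<Longrightarrow> c \<in> B \<Longrightarrow> \<bar>Lpair c g\<bar> \<le> M g"
      using weakly_bounded_bound_function[OF wb] by blast
    obtain s where sB: "\<And>n. s n \<in> B"
      and hump: "\<And>n. real n + (\<Sum>j<n. M (norming (s j))) \<le> 2/3 * L1norm (s n) * (1/4) ^ n"
      using gliding_hump_sequence[OF unbounded, of "\<lambda>c. M (norming c)"] by blast
    define G where "G y = (\<Sum>j. (1/4) ^ j * norming (s j) y)" for y
    have "continuous_map X euclideanreal G"
      unfolding G_def by (rule continuous_map_quarter_series) (use norming sB in auto)
    then obtain MG where MG: "\<And>c. c \<in> B \<Longrightarrow> \<bar>Lpair c G\<bar> \<le> MG"
      using weakly_boundedD[OF wb] by auto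
    obtain n :: nat where "MG < real n"
      using reals_Archimedean2 by blast
    have "finite (supp (s n))"
      using BL sB[of n] by (auto simp: Lcarrier_iff)
    then have "2/3 * L1norm (s n) * (1/4) ^ n - (\<Sum>j<n. \<bar>Lpair (s n) (norming (s j))\<bar>) \<le> Lpair (s n) G"
      unfolding G_def by (rule Lpair_quarter_series_lower_bound) (use norming sB in auto)
    moreover have "(\<Sum>j<n. \<bar>Lpair (s n) (norming (s j))\<bar>) \<le> (\<Sum>j<n. M (norming (s j)))"
      by (intro sum_mono M norming sB)
    ultimately have "real n \<le> Lpair (s n) G"
      using hump[of n] by linarith
    then show False
      using MG[OF sB, of n] \<open>MG < real n\<close> by linarith
  qed
  then show thesis
    using that by blast
qed

lemma continuous_map_stabilizing_limit:
  fixes G :: "nat \<Rightarrow> 'a \<Rightarrow> real" and r :: "nat \<Rightarrow> real"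
  assumes G: "\<And>n. continuous_map X euclideanreal (G n)"
    and h: "continuous_map X euclideanreal h"
    and r: "mono r" "\<And>y. \<exists>n. h y < r n"
    and stable: "\<And>n y. h y \<le> r n \<Longrightarrow> G (Suc n) y = G n y"
  obtains g where "continuous_map X euclideanreal g" "\<And>n y. h y \<le> r n \<Longrightarrow> g y = G n y"
proof -
  have stable_from: "G m y = G n y" if "h y \<le> r n" "n \<le> m" for y n m
    using that(2)
  proof (induction m rule: dec_induct)
    case (step m)
    then show ?case
      using stable[where n = m and y = y] monoD[OF r(1), of n m] that(1) by simp
  qed simp
  define g where "g y = G (LEAST n. h y \<le> r n) y" for y
  have g: "g y = G n y" if "h y \<le> r n" for y n
    unfolding g_def using LeastI[of "\<lambda>n. h y \<le> r n", OF that] Least_le[of "\<lambda>n. h y \<le> r n", OF that]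
    by (intro stable_from[symmetric]) auto
  have "continuous_map X euclideanreal g"
    unfolding continuous_map_def
  proof (intro conjI allI impI)
    show "g \<in> topspace X \<rightarrow> topspace euclideanreal"
      by simp
    fix U :: "real set"
    assume "openin euclideanreal U"
    have "{y \<in> topspace X. g y \<in> U} =
        (\<Union>n. {y \<in> topspace X. h y \<in> {..<r n}} \<inter> {y \<in> topspace X. G n y \<in> U})"
    proof (intro equalityI subsetI)
      fix y
      assume y: "y \<in> {y \<in> topspace X. g y \<in> U}"
      obtain n where "h y < r n"
        using r(2) by blast
      with y show "y \<in> (\<Union>n. {y \<in> topspace X. h y \<in> {..<r n}} \<inter> {y \<in> topspace X. G n y \<in> U})"
        using g[of y n] by auto
    next
      fix y
      assume "y \<in> (\<Union>n. {y \<in> topspace X. h y \<in> {..<r n}} \<inter> {y \<in> topspace X. G n y \<in> U})"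
      then obtain n where "y \<in> topspace X" "h y < r n" "G n y \<in> U"
        by auto
      then show "y \<in> {y \<in> topspace X. g y \<in> U}"
        using g[of y n] by simp
    qed
    also have "openin X \<dots>"
    proof (intro openin_Union ballI)
      fix V
      assume "V \<in> range (\<lambda>n. {y \<in> topspace X. h y \<in> {..<r n}} \<inter> {y \<in> topspace X. G n y \<in> U})"
      then obtain n where "V = {y \<in> topspace X. h y \<in> {..<r n}} \<inter> {y \<in> topspace X. G n y \<in> U}"
        by blast
      then show "openin X V"
        using \<open>openin euclideanreal U\<close> by (simp only:) (intro openin_Int
          openin_continuous_map_preimage[OF h] openin_continuous_map_preimage[OF G], simp_all)
    qed
    finally show "openin X {y \<in> topspace X. g y \<in> U}" .
  qed
  with g that show thesis
    by blast
qed

lemma Lpair_localized_bump: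
  assumes "tychonoff_space X" "c \<in> Lcarrier X" "x \<in> supp c" "continuous_map X euclideanreal h"
  obtains \<theta> where "continuous_map X euclideanreal \<theta>" "Lpair c \<theta> = c x"
    "\<And>y. h y \<le> h x - 1 \<Longrightarrow> \<theta> y = 0"
proof -
  have fin: "finite (supp c)" and sub: "supp c \<subseteq> topspace X"
    using assms(2) by (auto simp: Lcarrier_iff)
  obtain \<phi> where \<phi>: "continuous_map X euclideanreal \<phi>" "\<And>y. y \<in> supp c \<Longrightarrow> \<phi> y = (if y = x then 1 else 0)"
    using tychonoff_interpolating_function[OF assms(1) fin sub, where v = "\<lambda>y. if y = x then 1 else 0"]
    by blast
  define \<theta> where "\<theta> y = max 0 (1 - \<bar>h y - h x\<bar>) * \<phi> y" for y
  show thesis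
  proof
    show "continuous_map X euclideanreal \<theta>"
      unfolding \<theta>_def by (intro continuous_intros assms(4) \<phi>(1))
    show "Lpair c \<theta> = c x"
      using Lpair_remove[OF fin assms(3), of \<theta>] \<phi>(2) assms(3) by (simp add: \<theta>_def)
    show "\<theta> y = 0" if "h y \<le> h x - 1" for y
      using that by (simp add: \<theta>_def)
  qed
qed

lemma Lpair_adjust_above_level:
  assumes "tychonoff_space X" "c \<in> Lcarrier X" "x \<in> supp c" "continuous_map X euclideanreal h"
    and G: "continuous_map X euclideanreal G"
  obtains G' where "continuous_map X euclideanreal G'" "Lpair c G' = t"
    "\<And>y. h y \<le> h x - 1 \<Longrightarrow> G' y = G y"
proof -
  obtain \<theta> where \<theta>: "continuous_map X euclideanreal \<theta>" "Lpair c \<theta> = c x"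
    "\<And>y. h y \<le> h x - 1 \<Longrightarrow> \<theta> y = 0"
    using Lpair_localized_bump[OF assms(1-4)] by auto
  define a where "a = (t - Lpair c G) / c x"
  have "c x \<noteq> 0"
    using assms(3) by (simp add: supp_def)
  show thesis
  proof
    show "continuous_map X euclideanreal (\<lambda>y. G y + a * \<theta> y)"
      by (intro continuous_intros G \<theta>(1))
    have "Lpair c (\<lambda>y. G y + a * \<theta> y) = Lpair c G + a * c x"
      by (simp add: Lpair_add Lpair_cmult \<theta>(2))
    then show "Lpair c (\<lambda>y. G y + a * \<theta> y) = t"
      using \<open>c x \<noteq> 0\<close> by (simp add: a_def)
    show "G y + a * \<theta> y = G y" if "h y \<le> h x - 1" for y
      using \<theta>(3)[OF that] by simp
  qed
qed

definition supp_peak :: "('a \<Rightarrow> real) \<Rightarrow> ('a \<Rightarrow> real) \<Rightarrow> real" where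
  "supp_peak h c = Max (insert 0 (h ` supp c))"

lemma supp_peak_ge: "finite (supp c) \<Longrightarrow> y \<in> supp c \<Longrightarrow> h y \<le> supp_peak h c"
  unfolding supp_peak_def by (intro Max_ge) auto

lemma supp_peak_nonneg: "finite (supp c) \<Longrightarrow> 0 \<le> supp_peak h c"
  unfolding supp_peak_def by (intro Max_ge) auto

lemma Lpair_bump_sequence:
  assumes tych: "tychonoff_space X" and BL: "B \<subseteq> Lcarrier X"
    and h: "continuous_map X euclideanreal h" and unbounded: "\<And>R. \<exists>c\<in>B. \<exists>x\<in>supp c. R < h x"
  obtains c G where "\<And>n. c n \<in> B" "\<And>n. continuous_map X euclideanreal (G n)"
    "\<And>n. Lpair (c n) (G n) = real n" "\<And>n. supp_peak h (c n) + 2 \<le> supp_peak h (c (Suc n))"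
    "\<And>n y. h y \<le> supp_peak h (c n) + 1 \<Longrightarrow> G (Suc n) y = G n y"
proof -
  define P where "P n s \<longleftrightarrow> fst s \<in> B \<and> continuous_map X euclideanreal (snd s) \<and>
      Lpair (fst s) (snd s) = real n" for n s
  define Q where "Q s s' \<longleftrightarrow> supp_peak h (fst s) + 2 \<le> supp_peak h (fst s') \<and>
      (\<forall>y. h y \<le> supp_peak h (fst s) + 1 \<longrightarrow> snd s' y = snd s y)"
    for s s' :: "('a \<Rightarrow> real) \<times> ('a \<Rightarrow> real)"
  have "\<exists>s. \<forall>n. P n (s n) \<and> Q (s n) (s (Suc n))"
  proof (rule dependent_nat_choice)
    obtain c where "c \<in> B"
      using unbounded by blast
    then show "\<exists>s. P 0 s"
      unfolding P_def by (intro exI[of _ "(c, \<lambda>_. 0)"]) simp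
  next
    fix n and s :: "('a \<Rightarrow> real) \<times> ('a \<Rightarrow> real)"
    assume "P n s"
    obtain c G where s: "s = (c, G)"
      by fastforce
    obtain c' x' where c': "c' \<in> B" "x' \<in> supp c'" "supp_peak h c + 2 < h x'"
      using unbounded by blast
    have "c' \<in> Lcarrier X"
      using BL c'(1) by (rule subsetD)
    moreover have "continuous_map X euclideanreal G"
      using \<open>P n s\<close> unfolding P_def s by simp
    ultimately obtain G' where G': "continuous_map X euclideanreal G'" "Lpair c' G' = real (Suc n)"
      "\<And>y. h y \<le> h x' - 1 \<Longrightarrow> G' y = G y"
      using Lpair_adjust_above_level[OF tych _ c'(2) h, where t = "real (Suc n)"] by blast
    have "supp_peak h c + 2 \<le> supp_peak h c'"
      using supp_peak_ge[of c' x' h] \<open>c' \<in> Lcarrier X\<close> c'(2,3) by (simp add: Lcarrier_iff)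
    moreover have "G' y = G y" if "h y \<le> supp_peak h c + 1" for y
      using that c'(3) G'(3)[of y] by simp
    ultimately show "\<exists>s'. P (Suc n) s' \<and> Q s s'"
      using c'(1) G'(1,2) unfolding P_def Q_def s by (intro exI[of _ "(c', G')"]) auto
  qed
  then obtain s where s: "\<And>n. P n (s n)" "\<And>n. Q (s n) (s (Suc n))"
    by blast
  show thesis
  proof
    show "fst (s n) \<in> B" "continuous_map X euclideanreal (snd (s n))" "Lpair (fst (s n)) (snd (s n)) = real n"
      for n using s(1)[of n] by (simp_all add: P_def)
    show "supp_peak h (fst (s n)) + 2 \<le> supp_peak h (fst (s (Suc n)))"
      and "h y \<le> supp_peak h (fst (s n)) + 1 \<Longrightarrow> snd (s (Suc n)) y = snd (s n) y" for n y
      using s(2)[of n] by (simp_all add: Q_def)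
  qed
qed

lemma Lpair_unbounded_test_function:
  assumes tych: "tychonoff_space X" and BL: "B \<subseteq> Lcarrier X"
    and h: "continuous_map X euclideanreal h" and unbounded: "\<And>R. \<exists>c\<in>B. \<exists>x\<in>supp c. R < h x"
  obtains c g where "\<And>n. c n \<in> B" "continuous_map X euclideanreal g" "\<And>n. Lpair (c n) g = real n"
proof -
  have fin: "finite (supp c)" if "c \<in> B" for c
    using BL that by (auto simp: Lcarrier_iff)
  obtain c G where cG: "\<And>n. c n \<in> B" "\<And>n. continuous_map X euclideanreal (G n)"
    "\<And>n. Lpair (c n) (G n) = real n" and growth: "\<And>n. supp_peak h (c n) + 2 \<le> supp_peak h (c (Suc n))"
    and stable: "\<And>n y. h y \<le> supp_peak h (c n) + 1 \<Longrightarrow> G (Suc n) y = G n y"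
    using Lpair_bump_sequence[OF tych BL h unbounded] by blast
  have peak_growth: "2 * real n \<le> supp_peak h (c n)" for n
  proof (induction n)
    case 0
    then show ?case
      using supp_peak_nonneg[OF fin[OF cG(1)]] by simp
  next
    case (Suc n)
    then show ?case
      using growth[of n] by simp
  qed
  have exceeds: "\<exists>n. h y < supp_peak h (c n) + 1" for y
  proof -
    obtain n :: nat where "h y < real n"
      using reals_Archimedean2 by blast
    then show ?thesis
      using peak_growth[of n] by (intro exI[of _ n]) linarith
  qed
  have mono_levels: "mono (\<lambda>n. supp_peak h (c n) + 1)"
  proof (rule mono_iff_le_Suc[THEN iffD2], intro allI)
    show "supp_peak h (c n) + 1 \<le> supp_peak h (c (Suc n)) + 1" for n
      using growth[of n] by linarith
  qed
  obtain g where g: "continuous_map X euclideanreal g"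
    "\<And>n y. h y \<le> supp_peak h (c n) + 1 \<Longrightarrow> g y = G n y"
    using continuous_map_stabilizing_limit[where G = G and r = "\<lambda>n. supp_peak h (c n) + 1",
        OF cG(2) h mono_levels exceeds stable] by blast
  have "Lpair (c n) g = real n" for n
  proof -
    have "Lpair (c n) g = Lpair (c n) (G n)"
    proof (rule Lpair_cong)
      fix y
      assume "y \<in> supp (c n)"
      then have "h y \<le> supp_peak h (c n) + 1"
        using supp_peak_ge[OF fin[OF cG(1)], of y n h] by linarith
      then show "g y = G n y"
        by (rule g(2))
    qed
    then show ?thesis
      using cG(3) by simp
  qed
  with cG(1) g(1) that show thesis
    by blast
qed

lemma weakly_bounded_imp_functionally_bounded_supports:
  assumes tych: "tychonoff_space X" and wb: "weakly_bounded X B"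
  shows "functionally_bounded X (\<Union>c\<in>B. supp c)"
  unfolding functionally_bounded_def
proof (intro conjI allI impI)
  have BL: "B \<subseteq> Lcarrier X"
    using wb unfolding weakly_bounded_def by blast
  then show "(\<Union>c\<in>B. supp c) \<subseteq> topspace X"
    by (rule supports_subset_topspace)
  fix f :: "'a \<Rightarrow> real"
  assume f: "continuous_map X euclideanreal f"
  show "bounded (f ` (\<Union>c\<in>B. supp c))"
  proof (rule ccontr)
    assume "\<not> bounded (f ` (\<Union>c\<in>B. supp c))"
    then have "\<exists>c\<in>B. \<exists>x\<in>supp c. R < \<bar>f x\<bar>" for R
      unfolding bounded_real by (auto simp: not_le)
    moreover have "continuous_map X euclideanreal (\<lambda>y. \<bar>f y\<bar>)"
      by (intro continuous_intros f)
    ultimately obtain c g where "\<And>n. c n \<in> B" "continuous_map X euclideanreal g"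
      "\<And>n. Lpair (c n) g = real n"
      using Lpair_unbounded_test_function[OF tych BL] by blast
    moreover obtain M where "\<And>d. d \<in> B \<Longrightarrow> \<bar>Lpair d g\<bar> \<le> M"
      using weakly_boundedD[OF wb \<open>continuous_map X euclideanreal g\<close>] by auto
    moreover obtain n :: nat where "M < real n"
      using reals_Archimedean2 by blast
    ultimately show False
      by (metis abs_of_nat not_le)
  qed
qed

lemma compactin_imp_functionally_bounded:
  assumes "compactin X K"
  shows "functionally_bounded X K"
  unfolding functionally_bounded_def
proof (intro conjI allI impI)
  show "K \<subseteq> topspace X"
    by (rule compactin_subset_topspace[OF assms])
  fix f :: "'a \<Rightarrow> real"
  assume "continuous_map X euclideanreal f"
  then have "compact (f ` K)"
    using image_compactin[OF assms] compactin_euclidean_iff by blast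
  then show "bounded (f ` K)"
    by (rule compact_imp_bounded)
qed

lemma weakly_bounded_L1_ball:
  assumes "compactin X K"
  shows "weakly_bounded X {c \<in> Lcarrier X. supp c \<subseteq> K \<and> L1norm c \<le> r}"
  unfolding weakly_bounded_def
proof (intro conjI allI impI)
  fix f :: "'a \<Rightarrow> real"
  assume "continuous_map X euclideanreal f"
  then have "bounded (f ` K)"
    using compactin_imp_functionally_bounded[OF assms] unfolding functionally_bounded_def by blast
  then obtain M where "\<forall>y\<in>f ` K. \<bar>y\<bar> \<le> M"
    unfolding bounded_real by blast
  then have M: "\<And>x. x \<in> K \<Longrightarrow> \<bar>f x\<bar> \<le> M"
    by simp
  have "\<bar>Lpair c f\<bar> \<le> r * \<bar>M\<bar>" if "c \<in> Lcarrier X" "supp c \<subseteq> K" "L1norm c \<le> r" for c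
  proof -
    have "finite (supp c)"
      using that(1) by (simp add: Lcarrier_iff)
    moreover have "\<bar>f x\<bar> \<le> \<bar>M\<bar>" if "x \<in> supp c" for x
      using M[of x] \<open>supp c \<subseteq> K\<close> that abs_ge_self[of M] by auto
    ultimately have "\<bar>Lpair c f\<bar> \<le> L1norm c * \<bar>M\<bar>"
      by (rule abs_Lpair_le)
    also have "\<dots> \<le> r * \<bar>M\<bar>"
      using that(3) by (simp add: mult_right_mono)
    finally show ?thesis .
  qed
  then show "bounded ((\<lambda>c. Lpair c f) ` {c \<in> Lcarrier X. supp c \<subseteq> K \<and> L1norm c \<le> r})"
    unfolding bounded_real by (intro exI[of _ "r * \<bar>M\<bar>"]) auto
qed auto

lemma weakly_bounded_delta_image:
  assumes "compactin X K"
  shows "weakly_bounded X (delta ` K)"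
  unfolding weakly_bounded_def
proof (intro conjI allI impI)
  show "delta ` K \<subseteq> Lcarrier X"
    using compactin_subset_topspace[OF assms] by (auto intro: delta_in_Lcarrier)
  fix f :: "'a \<Rightarrow> real"
  assume "continuous_map X euclideanreal f"
  with compactin_imp_functionally_bounded[OF assms] have "bounded (f ` K)"
    unfolding functionally_bounded_def by simp
  then show "bounded ((\<lambda>c. Lpair c f) ` delta ` K)"
    by (simp add: image_image)
qed

lemma mu_space_compact_closure_supports:
  assumes "mu_space X" "weakly_bounded X B"
  shows "compactin X (X closure_of (\<Union>c\<in>B. supp c))"
proof -
  have "tychonoff_space X" "\<And>A. functionally_bounded X A \<Longrightarrow> compactin X (X closure_of A)"
    using assms(1) unfolding mu_space_def by auto
  then show ?thesis
    using weakly_bounded_imp_functionally_bounded_supports[OF _ assms(2)] by blast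
qed

lemma exists_ge_with_large_head:
  obtains \<beta> :: "nat \<Rightarrow> nat" where "\<alpha> \<le> \<beta>" "R \<le> real (\<beta> 0)"
proof
  show "\<alpha> \<le> \<alpha>(0 := max (\<alpha> 0) (nat \<lceil>R\<rceil>))"
    by (simp add: le_fun_def)
  show "R \<le> real ((\<alpha>(0 := max (\<alpha> 0) (nat \<lceil>R\<rceil>))) 0)"
    by (simp add: max_def) linarith
qed

lemma weakly_bounded_singleton:
  assumes "c \<in> Lcarrier X"
  shows "weakly_bounded X {c}"
  using assms unfolding weakly_bounded_def by simp

lemma weakly_bounded_in_L1_ball_of_resolution:
  assumes mu: "mu_space X" and K: "fundamental_compact_resolution X K" and wb: "weakly_bounded X B"
  shows "\<exists>\<beta>. B \<subseteq> {c \<in> Lcarrier X. supp c \<subseteq> K \<beta> \<and> L1norm c \<le> real (\<beta> 0)}"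
proof -
  have Km: "\<And>\<alpha> \<beta>. \<alpha> \<le> \<beta> \<Longrightarrow> K \<alpha> \<subseteq> K \<beta>" and Kf: "\<And>C. compactin X C \<Longrightarrow> \<exists>\<alpha>. C \<subseteq> K \<alpha>"
    using K unfolding fundamental_compact_resolution_def by auto
  have BL: "B \<subseteq> Lcarrier X"
    using wb unfolding weakly_bounded_def by blast
  obtain \<alpha> where "X closure_of (\<Union>c\<in>B. supp c) \<subseteq> K \<alpha>"
    using Kf[OF mu_space_compact_closure_supports[OF mu wb]] by blast
  with closure_of_subset[OF supports_subset_topspace[OF BL]]
  have supp: "supp c \<subseteq> K \<alpha>" if "c \<in> B" for c
    using that by blast
  obtain R where R: "\<And>c. c \<in> B \<Longrightarrow> L1norm c \<le> R"
    using weakly_bounded_imp_L1norm_bounded[OF _ wb] mu unfolding mu_space_def by auto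
  obtain \<beta> where "\<alpha> \<le> \<beta>" "R \<le> real (\<beta> 0)"
    by (rule exists_ge_with_large_head)
  have "c \<in> {c \<in> Lcarrier X. supp c \<subseteq> K \<beta> \<and> L1norm c \<le> real (\<beta> 0)}" if "c \<in> B" for c
  proof -
    have "supp c \<subseteq> K \<beta>"
      using supp[OF that] Km[OF \<open>\<alpha> \<le> \<beta>\<close>] by (rule order.trans)
    moreover have "L1norm c \<le> real (\<beta> 0)"
      using R[OF that] \<open>R \<le> real (\<beta> 0)\<close> by linarith
    ultimately show ?thesis
      using BL that by blast
  qed
  then have "B \<subseteq> {c \<in> Lcarrier X. supp c \<subseteq> K \<beta> \<and> L1norm c \<le> real (\<beta> 0)}"
    by blast
  then show ?thesis
    by (rule exI[of _ \<beta>])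
qed

lemma fundamental_bounded_resolution_if_compact:
  assumes mu: "mu_space X" and K: "fundamental_compact_resolution X K"
  shows "fundamental_bounded_resolution (Lp_topology X)
    (\<lambda>\<alpha>. {c \<in> Lcarrier X. supp c \<subseteq> K \<alpha> \<and> L1norm c \<le> real (\<alpha> 0)})"
    (is "fundamental_bounded_resolution _ ?Kb")
  unfolding fundamental_bounded_resolution_def tvs_bounded_Lp_iff topspace_Lp_topology
proof (intro conjI allI impI)
  have Kc: "\<And>\<alpha>. compactin X (K \<alpha>)" and Km: "\<And>\<alpha> \<beta>. \<alpha> \<le> \<beta> \<Longrightarrow> K \<alpha> \<subseteq> K \<beta>"
    using K unfolding fundamental_compact_resolution_def by auto
  show "weakly_bounded X (?Kb \<alpha>)" for \<alpha>
    by (rule weakly_bounded_L1_ball[OF Kc])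
  show "?Kb \<alpha> \<subseteq> ?Kb \<beta>" if "\<alpha> \<le> \<beta>" for \<alpha> \<beta>
  proof -
    have "real (\<alpha> 0) \<le> real (\<beta> 0)"
      using that by (simp add: le_fun_def)
    then show ?thesis
      using Km[OF that] by auto
  qed
  show "\<exists>\<alpha>. B \<subseteq> ?Kb \<alpha>" if "weakly_bounded X B" for B
    by (rule weakly_bounded_in_L1_ball_of_resolution[OF mu K that])
  show "(\<Union>\<alpha>. ?Kb \<alpha>) = Lcarrier X"
  proof (intro equalityI subsetI)
    fix c
    assume "c \<in> Lcarrier X"
    obtain \<alpha> where "{c} \<subseteq> ?Kb \<alpha>"
      using weakly_bounded_in_L1_ball_of_resolution[OF mu K weakly_bounded_singleton[OF \<open>c \<in> Lcarrier X\<close>]]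
      by (rule exE)
    then show "c \<in> (\<Union>\<alpha>. ?Kb \<alpha>)"
      by auto
  qed auto
qed

lemma delta_mem_imp_in_closure_supports:
  assumes "x \<in> topspace X" "delta x \<in> B"
  shows "x \<in> X closure_of (\<Union>c\<in>B. supp c)"
proof -
  have "x \<in> supp (delta x)"
    by simp
  with assms have "x \<in> topspace X \<inter> (\<Union>c\<in>B. supp c)"
    by blast
  then show ?thesis
    using closure_of_subset_Int by (rule subsetD[rotated])
qed

lemma fundamental_compact_resolution_if_bounded:
  assumes mu: "mu_space X" and Kb: "fundamental_bounded_resolution (Lp_topology X) Kb"
  shows "fundamental_compact_resolution X (\<lambda>\<alpha>. X closure_of (\<Union>c\<in>Kb \<alpha>. supp c))"
  unfolding fundamental_compact_resolution_def
proof (intro conjI allI impI)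
  have wb: "\<And>\<alpha>. weakly_bounded X (Kb \<alpha>)" and mono: "\<And>\<alpha> \<beta>. \<alpha> \<le> \<beta> \<Longrightarrow> Kb \<alpha> \<subseteq> Kb \<beta>"
    and cover: "(\<Union>\<alpha>. Kb \<alpha>) = Lcarrier X" and absorbed: "\<And>B. weakly_bounded X B \<Longrightarrow> \<exists>\<alpha>. B \<subseteq> Kb \<alpha>"
    using Kb unfolding fundamental_bounded_resolution_def tvs_bounded_Lp_iff topspace_Lp_topology
    by auto
  show "compactin X (X closure_of (\<Union>c\<in>Kb \<alpha>. supp c))" for \<alpha>
    by (rule mu_space_compact_closure_supports[OF mu wb])
  show "X closure_of (\<Union>c\<in>Kb \<alpha>. supp c) \<subseteq> X closure_of (\<Union>c\<in>Kb \<beta>. supp c)"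
    if "\<alpha> \<le> \<beta>" for \<alpha> \<beta>
    using mono[OF that] by (intro closure_of_mono) blast
  show "(\<Union>\<alpha>. X closure_of (\<Union>c\<in>Kb \<alpha>. supp c)) = topspace X"
  proof (intro equalityI subsetI)
    fix x
    assume "x \<in> topspace X"
    then have "delta x \<in> (\<Union>\<alpha>. Kb \<alpha>)"
      unfolding cover by (rule delta_in_Lcarrier)
    then obtain \<alpha> where "delta x \<in> Kb \<alpha>"
      by blast
    then show "x \<in> (\<Union>\<alpha>. X closure_of (\<Union>c\<in>Kb \<alpha>. supp c))"
      using delta_mem_imp_in_closure_supports[OF \<open>x \<in> topspace X\<close>] by blast
  next
    fix x
    assume "x \<in> (\<Union>\<alpha>. X closure_of (\<Union>c\<in>Kb \<alpha>. supp c))"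
    then obtain \<alpha> where "x \<in> X closure_of (\<Union>c\<in>Kb \<alpha>. supp c)"
      by (rule UN_E)
    then show "x \<in> topspace X"
      by (rule subsetD[OF closure_of_subset_topspace])
  qed
  show "\<exists>\<alpha>. C \<subseteq> X closure_of (\<Union>c\<in>Kb \<alpha>. supp c)" if C: "compactin X C" for C
  proof -
    obtain \<alpha> where \<alpha>: "delta ` C \<subseteq> Kb \<alpha>"
      using absorbed[OF weakly_bounded_delta_image[OF C]] by (rule exE)
    have "C \<subseteq> X closure_of (\<Union>c\<in>Kb \<alpha>. supp c)"
    proof
      fix x
      assume "x \<in> C"
      then show "x \<in> X closure_of (\<Union>c\<in>Kb \<alpha>. supp c)"
        using delta_mem_imp_in_closure_supports[of x X "Kb \<alpha>"] compactin_subset_topspace[OF C] \<alpha>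
        by auto
    qed
    then show ?thesis
      by (rule exI[of _ \<alpha>])
  qed
qed

theorem proposition3p8:
  fixes X :: "'a topology"
  assumes "mu_space X"
  shows "(\<exists>K. fundamental_compact_resolution X K) \<longleftrightarrow>
         (\<exists>K. fundamental_bounded_resolution (Lp_topology X) K)"
  using fundamental_bounded_resolution_if_compact[OF assms]
    fundamental_compact_resolution_if_bounded[OF assms] by blast

end
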